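(* Let $p_{Z|XY}$ be a randomized function (not necessarily in normal form) and let $p_X,p_Y$ be distributions on $\mathcal X,\mathcal Y$. Any secure protocol $\Pi(p_Xp_Y,p_{Z|XY})$, i.e. with independent inputs $X\sim p_X$, $Y\sim p_Y$, satisfies $I(X;M_{23})=I(Y;M_{31})=0$.
   Context: Setting: $\mathcal X,\mathcal Y,\mathcal Z$ finite sets; Alice (party 1) holds $X\in\mathcal X$, Bob (party 2) holds $Y\in\mathcal Y$, $(X,Y)\sim p_{XY}$; Charlie (party 3) has no input and outputs $Z\in\mathcal Z$; a randomized function is a conditional distribution $p_{Z|XY}$. In a protocol the parties, each with private randomness, exchange messages over multiple rounds on three pairwise private links, each message a codeword of a prefix-free code determined by previous messages on that link; the protocol terminates with probability 1 and may depend on $p_{XY}$. $M_{12},M_{23},M_{31}$ are the final transcripts on the Alice–Bob, Bob–Charlie, Charlie–Alice links. A secure protocol $\Pi(p_{XY},p_{Z|XY})$ satisfies correctness (on inputs $x,y$ Charlie's output has distribution $p_{Z|X=x,Y=y}$) and privacy (Markov chains $(M_{12},M_{31})-X-(Y,Z)$, $(M_{12},M_{23})-Y-(X,Z)$, $(M_{23},M_{31})-Z-(X,Y)$). *)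

theory Defs
  imports "HOL-Probability.Probability"
begin

text \<open>
  An outcome of a run records
  Alice's input x, Bob's input y, Charlie's output z and the three final
  link transcripts m12 (Alice-Bob), m23 (Bob-Charlie), m31 (Charlie-Alice).
  Transcripts are concatenations of codewords of binary prefix-free codes,
  hence finite bit strings (bool list).  A protocol, run on inputs drawn
  from the input distribution, induces a joint distribution (a pmf) of these
  six random variables; the security notions only refer to this joint law.
\<close>

type_synonym ('x, 'y, 'z) outcome = "'x \<times> 'y \<times> 'z \<times> bool list \<times> bool list \<times> bool list"

definition inX :: "('x, 'y, 'z) outcome \<Rightarrow> 'x" where "inX w = fst w"
definition inY :: "('x, 'y, 'z) outcome \<Rightarrow> 'y" where "inY w = fst (snd w)"
definition outZ :: "('x, 'y, 'z) outcome \<Rightarrow> 'z" where "outZ w = fst (snd (snd w))"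
definition M12 :: "('x, 'y, 'z) outcome \<Rightarrow> bool list" where "M12 w = fst (snd (snd (snd w)))"
definition M23 :: "('x, 'y, 'z) outcome \<Rightarrow> bool list" where "M23 w = fst (snd (snd (snd (snd w))))"
definition M31 :: "('x, 'y, 'z) outcome \<Rightarrow> bool list" where "M31 w = snd (snd (snd (snd (snd w))))"

definition markov_chain :: "'w pmf \<Rightarrow> ('w \<Rightarrow> 'a) \<Rightarrow> ('w \<Rightarrow> 'b) \<Rightarrow> ('w \<Rightarrow> 'c) \<Rightarrow> bool" where
  "markov_chain P A B C \<longleftrightarrow>
     (\<forall>a b c. measure_pmf.prob P {w. A w = a \<and> B w = b \<and> C w = c} * measure_pmf.prob P {w. B w = b}
            = measure_pmf.prob P {w. A w = a \<and> B w = b} * measure_pmf.prob P {w. B w = b \<and> C w = c})"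

text \<open>Secure protocol for input distribution pXY and randomized function W
  (W x y is the conditional distribution of Z given X = x, Y = y), expressed
  through the joint law P of a run: correct inputs, correctness, privacy.\<close>
definition secure_protocol ::
  "('x \<times> 'y) pmf \<Rightarrow> ('x \<Rightarrow> 'y \<Rightarrow> 'z pmf) \<Rightarrow> ('x, 'y, 'z) outcome pmf \<Rightarrow> bool" where
  "secure_protocol pXY W P \<longleftrightarrow>
     map_pmf (\<lambda>w. (inX w, inY w)) P = pXY \<and>
     (\<forall>x y z. measure_pmf.prob P {w. inX w = x \<and> inY w = y \<and> outZ w = z}
               = pmf pXY (x, y) * pmf (W x y) z) \<and>
     markov_chain P (\<lambda>w. (M12 w, M31 w)) inX (\<lambda>w. (inY w, outZ w)) \<and>
     markov_chain P (\<lambda>w. (M12 w, M23 w)) inY (\<lambda>w. (inX w, outZ w)) \<and>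
     markov_chain P (\<lambda>w. (M23 w, M31 w)) outZ (\<lambda>w. (inX w, inY w))"

end

theory Submission
  imports Defs
begin

text \<open>
  Bob's privacy condition gives the Markov chain M23 - Y - X after forgetting M12 and Z.
  Since the inputs are independent, p(x, m) = \<Sum> y. p(m | y) p(y) p(x) = p(m) p(x),
  so X is independent of M23 and their mutual information vanishes.  Symmetrically,
  Alice's privacy condition makes Y independent of M31.
\<close>

definition indep_pmf :: "'w pmf \<Rightarrow> ('w \<Rightarrow> 'a) \<Rightarrow> ('w \<Rightarrow> 'b) \<Rightarrow> bool" where
  "indep_pmf P X Y \<longleftrightarrow>
     (\<forall>x y. measure_pmf.prob P {w. X w = x \<and> Y w = y}
              = measure_pmf.prob P {w. X w = x} * measure_pmf.prob P {w. Y w = y})"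

lemma indep_pmf_commute: "indep_pmf P X Y \<Longrightarrow> indep_pmf P Y X"
  unfolding indep_pmf_def by (simp add: conj_commute mult.commute)

lemma indep_pmf_if_map_pmf_eq_pair_pmf:
  assumes joint: "map_pmf (\<lambda>w. (X w, Y w)) P = pair_pmf p q"
  shows "indep_pmf P X Y"
  unfolding indep_pmf_def
proof (intro allI)
  fix x y
  have "map_pmf X P = p" "map_pmf Y P = q"
    using arg_cong[OF joint, of "map_pmf fst"] arg_cong[OF joint, of "map_pmf snd"]
    by (simp_all add: map_pmf_comp map_fst_pair_pmf map_snd_pair_pmf)
  then have "measure_pmf.prob P {w. X w = x} = pmf p x" "measure_pmf.prob P {w. Y w = y} = pmf q y"
    by (auto simp: pmf_map vimage_def)
  moreover have "measure_pmf.prob P {w. X w = x \<and> Y w = y} = pmf p x * pmf q y"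
    using arg_cong[OF joint, of "\<lambda>r. pmf r (x, y)"] by (simp add: pmf_map vimage_def pmf_pair)
  ultimately show "measure_pmf.prob P {w. X w = x \<and> Y w = y}
      = measure_pmf.prob P {w. X w = x} * measure_pmf.prob P {w. Y w = y}" by simp
qed

lemma
  fixes P :: "'w pmf" and A :: "'w \<Rightarrow> 'a"
  shows measure_pmf_prob_eq_infsetsum_fibres:
      "measure_pmf.prob P {w. A w \<in> S \<and> Q w} = (\<Sum>\<^sub>aa\<in>S. measure_pmf.prob P {w. A w = a \<and> Q w})"
    and abs_summable_on_measure_pmf_prob_fibres:
      "Infinite_Set_Sum.abs_summable_on (\<lambda>a. measure_pmf.prob P {w. A w = a \<and> Q w}) S"
proof -
  define g where "g w = (if Q w then Some (A w) else None)" for w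
  have fibre: "measure_pmf.prob P {w. A w = a \<and> Q w} = pmf (map_pmf g P) (Some a)" for a
  proof -
    have "{w. A w = a \<and> Q w} = g -` {Some a}" by (auto simp: g_def split: if_splits)
    then show ?thesis by (simp add: pmf_map)
  qed
  have "{w. A w \<in> S \<and> Q w} = g -` (Some ` S)" by (auto simp: g_def split: if_splits)
  then have "measure_pmf.prob P {w. A w \<in> S \<and> Q w} = measure (map_pmf g P) (Some ` S)" by simp
  also have "\<dots> = (\<Sum>\<^sub>ab\<in>Some ` S. pmf (map_pmf g P) b)" by (rule measure_pmf_conv_infsetsum)
  also have "\<dots> = (\<Sum>\<^sub>aa\<in>S. pmf (map_pmf g P) (Some a))" by (rule infsetsum_reindex) simp
  finally show "measure_pmf.prob P {w. A w \<in> S \<and> Q w} = (\<Sum>\<^sub>aa\<in>S. measure_pmf.prob P {w. A w = a \<and> Q w})"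
    by (simp add: fibre)
  have "Infinite_Set_Sum.abs_summable_on (\<lambda>a. pmf (map_pmf g P) (Some a)) S"
    by (subst abs_summable_on_reindex_iff) auto
  then show "Infinite_Set_Sum.abs_summable_on (\<lambda>a. measure_pmf.prob P {w. A w = a \<and> Q w}) S"
    by (simp add: fibre)
qed

lemma markov_chain_commute: "markov_chain P A B C \<Longrightarrow> markov_chain P C B A"
  unfolding markov_chain_def by (simp add: conj_commute conj_left_commute mult.commute)

lemma markov_chain_map_left:
  assumes "markov_chain P A B C"
  shows "markov_chain P (\<lambda>w. f (A w)) B C"
  unfolding markov_chain_def
proof (intro allI)
  fix a' b c
  let ?pr = "measure_pmf.prob P"
  have "?pr {w. f (A w) = a' \<and> B w = b \<and> C w = c} * ?pr {w. B w = b}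
      = (\<Sum>\<^sub>aa\<in>f -` {a'}. ?pr {w. A w = a \<and> B w = b \<and> C w = c}) * ?pr {w. B w = b}"
    using measure_pmf_prob_eq_infsetsum_fibres[of P A "f -` {a'}" "\<lambda>w. B w = b \<and> C w = c"] by simp
  also have "\<dots> = (\<Sum>\<^sub>aa\<in>f -` {a'}. ?pr {w. A w = a \<and> B w = b \<and> C w = c} * ?pr {w. B w = b})"
    by (rule infsetsum_cmult_left[symmetric]) (rule abs_summable_on_measure_pmf_prob_fibres)
  also have "\<dots> = (\<Sum>\<^sub>aa\<in>f -` {a'}. ?pr {w. A w = a \<and> B w = b} * ?pr {w. B w = b \<and> C w = c})"
    using assms unfolding markov_chain_def by simp
  also have "\<dots> = (\<Sum>\<^sub>aa\<in>f -` {a'}. ?pr {w. A w = a \<and> B w = b}) * ?pr {w. B w = b \<and> C w = c}"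
    by (rule infsetsum_cmult_left) (rule abs_summable_on_measure_pmf_prob_fibres)
  also have "\<dots> = ?pr {w. f (A w) = a' \<and> B w = b} * ?pr {w. B w = b \<and> C w = c}"
    using measure_pmf_prob_eq_infsetsum_fibres[of P A "f -` {a'}" "\<lambda>w. B w = b"] by simp
  finally show "?pr {w. f (A w) = a' \<and> B w = b \<and> C w = c} * ?pr {w. B w = b} =
      ?pr {w. f (A w) = a' \<and> B w = b} * ?pr {w. B w = b \<and> C w = c}" .
qed

lemma markov_chain_map_right:
  "markov_chain P A B C \<Longrightarrow> markov_chain P A B (\<lambda>w. f (C w))"
  by (rule markov_chain_commute[OF markov_chain_map_left[OF markov_chain_commute]])

lemma indep_pmf_if_markov_chain:
  fixes Y :: "'w \<Rightarrow> 'y::finite"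
  assumes markov: "markov_chain P M Y X" and indep: "indep_pmf P X Y"
  shows "indep_pmf P X M"
  unfolding indep_pmf_def
proof (intro allI)
  fix x m
  let ?pr = "measure_pmf.prob P"
  have fibre: "?pr {w. Y w = y \<and> X w = x \<and> M w = m} = ?pr {w. Y w = y \<and> M w = m} * ?pr {w. X w = x}" for y
  proof (cases "?pr {w. Y w = y} = 0")
    case True
    have "?pr {w. Y w = y \<and> X w = x \<and> M w = m} \<le> ?pr {w. Y w = y}"
      and "?pr {w. Y w = y \<and> M w = m} \<le> ?pr {w. Y w = y}"
      by (auto intro: measure_pmf.finite_measure_mono)
    with True show ?thesis by (simp add: measure_le_0_iff)
  next
    case False
    have "?pr {w. M w = m \<and> Y w = y \<and> X w = x} * ?pr {w. Y w = y}
        = ?pr {w. M w = m \<and> Y w = y} * ?pr {w. Y w = y \<and> X w = x}"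
      using markov unfolding markov_chain_def by blast
    also have "?pr {w. Y w = y \<and> X w = x} = ?pr {w. X w = x} * ?pr {w. Y w = y}"
      using indep unfolding indep_pmf_def by (simp add: conj_commute)
    finally have "?pr {w. M w = m \<and> Y w = y \<and> X w = x} = ?pr {w. M w = m \<and> Y w = y} * ?pr {w. X w = x}"
      using False by simp
    moreover have "{w. M w = m \<and> Y w = y \<and> X w = x} = {w. Y w = y \<and> X w = x \<and> M w = m}"
      and "{w. M w = m \<and> Y w = y} = {w. Y w = y \<and> M w = m}" by auto
    ultimately show ?thesis by simp
  qed
  have "?pr {w. X w = x \<and> M w = m} = ?pr {w. Y w \<in> UNIV \<and> X w = x \<and> M w = m}" by simp
  also have "\<dots> = (\<Sum>y\<in>UNIV. ?pr {w. Y w = y \<and> X w = x \<and> M w = m})"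
    unfolding measure_pmf_prob_eq_infsetsum_fibres by (rule infsetsum_finite) simp
  also have "\<dots> = (\<Sum>y\<in>UNIV. ?pr {w. Y w = y \<and> M w = m}) * ?pr {w. X w = x}"
    by (simp add: fibre sum_distrib_right)
  also have "(\<Sum>y\<in>UNIV. ?pr {w. Y w = y \<and> M w = m}) = ?pr {w. Y w \<in> UNIV \<and> M w = m}"
    unfolding measure_pmf_prob_eq_infsetsum_fibres by (rule infsetsum_finite[symmetric]) simp
  also have "\<dots> = ?pr {w. M w = m}" by simp
  finally show "?pr {w. X w = x \<and> M w = m} = ?pr {w. X w = x} * ?pr {w. M w = m}"
    by (simp add: mult.commute)
qed

lemma distr_pair_eq_pair_measure_if_indep_pmf:
  fixes X :: "'w \<Rightarrow> 'a::countable" and Y :: "'w \<Rightarrow> 'b::countable"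
  assumes indep: "indep_pmf P X Y"
  shows "distr (measure_pmf P) (count_space UNIV) X \<Otimes>\<^sub>M distr (measure_pmf P) (count_space UNIV) Y
       = distr (measure_pmf P) (count_space UNIV \<Otimes>\<^sub>M count_space UNIV) (\<lambda>w. (X w, Y w))"
    (is "?DX \<Otimes>\<^sub>M ?DY = ?DXY")
proof (rule measure_eqI_countable[where A = UNIV])
  interpret DY: prob_space ?DY by (rule measure_pmf.prob_space_distr) simp
  have "sets (?DX \<Otimes>\<^sub>M ?DY) = sets (count_space (UNIV::'a set) \<Otimes>\<^sub>M count_space (UNIV::'b set))"
    by (intro sets_pair_measure_cong) auto
  then show "sets (?DX \<Otimes>\<^sub>M ?DY) = Pow UNIV"
    by (subst (asm) pair_measure_countable) auto
  show "sets ?DXY = Pow UNIV"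
    by (simp add: pair_measure_countable)
  fix ab :: "'a \<times> 'b"
  obtain a b where ab: "ab = (a, b)" by fastforce
  have singleton: "{(a, b)} \<in> sets (count_space (UNIV::'a set) \<Otimes>\<^sub>M count_space (UNIV::'b set))"
    by (subst pair_measure_countable) auto
  have "emeasure (?DX \<Otimes>\<^sub>M ?DY) {ab} = emeasure ?DX {a} * emeasure ?DY {b}"
    unfolding ab by (subst DY.emeasure_pair_measure_Times[symmetric]) auto
  also have "\<dots> = ennreal (measure_pmf.prob P {w. X w = a} * measure_pmf.prob P {w. Y w = b})"
    by (simp add: emeasure_distr measure_pmf.emeasure_eq_measure vimage_def ennreal_mult)
  also have "\<dots> = emeasure ?DXY {ab}"
    using singleton unfolding ab indep[unfolded indep_pmf_def, rule_format, symmetric]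
    by (subst emeasure_distr) (auto simp: pair_measure_countable measure_pmf.emeasure_eq_measure vimage_def)
  finally show "emeasure (?DX \<Otimes>\<^sub>M ?DY) {ab} = emeasure ?DXY {ab}" .
qed simp

lemma mutual_information_eq_0_if_indep_pmf:
  fixes X :: "'w \<Rightarrow> 'a::countable" and Y :: "'w \<Rightarrow> 'b::countable"
  assumes "indep_pmf P X Y"
  shows "prob_space.mutual_information (measure_pmf P) b (count_space UNIV) (count_space UNIV) X Y = 0"
proof -
  interpret prob_space "distr (measure_pmf P) (count_space UNIV \<Otimes>\<^sub>M count_space UNIV) (\<lambda>w. (X w, Y w))"
    by (rule measure_pmf.prob_space_distr) (simp add: pair_measure_countable)
  show ?thesis
    unfolding prob_space.mutual_information_def[OF prob_space_measure_pmf]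
      distr_pair_eq_pair_measure_if_indep_pmf[OF assms]
    by (rule KL_same_eq_0)
qed

theorem lemma5:
  fixes pX :: "'x::finite pmf" and pY :: "'y::finite pmf"
    and W :: "'x \<Rightarrow> 'y \<Rightarrow> 'z::finite pmf"
    and P :: "('x, 'y, 'z) outcome pmf"
  assumes "secure_protocol (pair_pmf pX pY) W P"
  shows "prob_space.mutual_information (measure_pmf P) 2 (count_space UNIV) (count_space UNIV) inX M23 = 0
         \<and> prob_space.mutual_information (measure_pmf P) 2 (count_space UNIV) (count_space UNIV) inY M31 = 0"
proof -
  have inputs: "map_pmf (\<lambda>w. (inX w, inY w)) P = pair_pmf pX pY"
    and alice: "markov_chain P (\<lambda>w. (M12 w, M31 w)) inX (\<lambda>w. (inY w, outZ w))"
    and bob: "markov_chain P (\<lambda>w. (M12 w, M23 w)) inY (\<lambda>w. (inX w, outZ w))"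
    using assms unfolding secure_protocol_def by blast+
  have indep_XY: "indep_pmf P inX inY"
    by (rule indep_pmf_if_map_pmf_eq_pair_pmf[OF inputs])
  have "markov_chain P M23 inY inX"
    using markov_chain_map_right[OF markov_chain_map_left[OF bob, of snd], of fst] by simp
  then have "indep_pmf P inX M23"
    using indep_XY by (rule indep_pmf_if_markov_chain)
  moreover have "markov_chain P M31 inX inY"
    using markov_chain_map_right[OF markov_chain_map_left[OF alice, of snd], of fst] by simp
  then have "indep_pmf P inY M31"
    using indep_pmf_commute[OF indep_XY] by (rule indep_pmf_if_markov_chain)
  ultimately show ?thesis
    by (simp add: mutual_information_eq_0_if_indep_pmf)
qed

end
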